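(* For every $t\in\mathtt T_J$: $t$ is a $\to_{d\beta}$-normal form if and only if $t\in\mathtt m$, where $\mathtt m$ and $\mathtt m_{var}$ are the sets of terms generated by the grammar $\mathtt m_{var} ::= x \mid \mathtt m_{var}(\mathtt m, y.\mathtt m_{var})$ and $\mathtt m ::= x \mid \lambda x.\mathtt m \mid \mathtt m_{var}(\mathtt m, y.\mathtt m)$.
   Context: Terms $\mathtt T_J$: $t,u,r ::= x \mid \lambda x.t \mid t(u,y.r)$ ($y$ bound in $r$), up to $\alpha$-equivalence; $\{u/x\}t$ is capture-avoiding substitution. List contexts: $\mathtt D ::= \Diamond \mid t(u,y.\mathtt D)$, $\mathtt D\langle s\rangle$ denoting hole filling. Distant beta: $\mathtt D\langle\lambda x.t\rangle(u,y.r) \mapsto_{d\beta} \{\{u/x\}\mathtt D\langle t\rangle/y\}r$ (variables bound by $\mathtt D$ not free in $u$, $x$ not occurring in $\mathtt D$), and $\to_{d\beta}$ is its closure under all term contexts. A normal form is a term with no $\to_{d\beta}$-reduct. *)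

theory Defs
  imports Main
begin

text \<open>Terms of T_J up to alpha-equivalence, in de Bruijn representation.
  App t u r stands for t(u, y.r): the variable y is bound in r (index 0 of r).\<close>

datatype tm = Var nat | Lam tm | App tm tm tm

fun lift :: "tm \<Rightarrow> nat \<Rightarrow> tm" where
  "lift (Var i) k = (if i < k then Var i else Var (Suc i))"
| "lift (Lam t) k = Lam (lift t (Suc k))"
| "lift (App t u r) k = App (lift t k) (lift u k) (lift r (Suc k))"

fun subst :: "tm \<Rightarrow> tm \<Rightarrow> nat \<Rightarrow> tm" where
  "subst (Var i) s k = (if k < i then Var (i - 1) else if i = k then s else Var i)"
| "subst (Lam t) s k = Lam (subst t (lift s 0) (Suc k))"
| "subst (App t u r) s k = App (subst t s k) (subst u s k) (subst r (lift s 0) (Suc k))"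

datatype lctx = Hole | DApp tm tm lctx

fun fill :: "lctx \<Rightarrow> tm \<Rightarrow> tm" where
  "fill Hole s = s"
| "fill (DApp t u D) s = App t u (fill D s)"

fun depth :: "lctx \<Rightarrow> nat" where
  "depth Hole = 0"
| "depth (DApp t u D) = Suc (depth D)"

text \<open>Distant beta: D<lam x.t>(u, y.r) |-> {{u/x} D<t> / y} r.  The free variables of u
  are shifted past the depth(D) binders of D (this realises the variable conventions).\<close>
inductive dbeta_root :: "tm \<Rightarrow> tm \<Rightarrow> bool" where
  "dbeta_root (App (fill D (Lam t)) u r)
              (subst r (fill D (subst t (((\<lambda>v. lift v 0) ^^ depth D) u) 0)) 0)"

inductive dbeta :: "tm \<Rightarrow> tm \<Rightarrow> bool" where
  root: "dbeta_root t t' \<Longrightarrow> dbeta t t'"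
| lam: "dbeta t t' \<Longrightarrow> dbeta (Lam t) (Lam t')"
| app1: "dbeta t t' \<Longrightarrow> dbeta (App t u r) (App t' u r)"
| app2: "dbeta u u' \<Longrightarrow> dbeta (App t u r) (App t u' r)"
| app3: "dbeta r r' \<Longrightarrow> dbeta (App t u r) (App t u r')"

definition normal_form :: "tm \<Rightarrow> bool" where
  "normal_form t \<longleftrightarrow> \<not> (\<exists>t'. dbeta t t')"

inductive m_var :: "tm \<Rightarrow> bool" and m_nf :: "tm \<Rightarrow> bool" where
  mv_var: "m_var (Var i)"
| mv_app: "m_var t \<Longrightarrow> m_nf u \<Longrightarrow> m_var r \<Longrightarrow> m_var (App t u r)"
| m_var': "m_nf (Var i)"
| m_lam: "m_nf t \<Longrightarrow> m_nf (Lam t)"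
| m_app: "m_var t \<Longrightarrow> m_nf u \<Longrightarrow> m_nf r \<Longrightarrow> m_nf (App t u r)"

end

theory Submission
  imports Defs
begin

text \<open>A term is a normal form iff no subterm is a distant redex, i.e. iff no left
  component of an application has the shape D<lam x.s>.  The grammar m_var describes
  exactly the normal forms not of that shape, so the two grammars are the normal forms
  split according to whether a term may stand in function position.\<close>

fun ends_in_Lam :: "tm \<Rightarrow> bool" where
  "ends_in_Lam (Var i) = False"
| "ends_in_Lam (Lam t) = True"
| "ends_in_Lam (App t u r) = ends_in_Lam r"

lemma ends_in_Lam_iff_fill: "ends_in_Lam t \<longleftrightarrow> (\<exists>D s. t = fill D (Lam s))"
proof
  show "ends_in_Lam t \<Longrightarrow> \<exists>D s. t = fill D (Lam s)"
  proof (induction t)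
    case (Lam t)
    have "Lam t = fill Hole (Lam t)" by simp
    then show ?case by blast
  next
    case (App t u r)
    then obtain D s where "r = fill D (Lam s)" by auto
    then have "App t u r = fill (DApp t u D) (Lam s)" by simp
    then show ?case by blast
  qed simp
next
  have "ends_in_Lam (fill D (Lam s))" for D s by (induction D) auto
  then show "\<exists>D s. t = fill D (Lam s) \<Longrightarrow> ends_in_Lam t" by blast
qed

lemma m_varD: "m_var t \<Longrightarrow> m_nf t \<and> \<not> ends_in_Lam t"
  and "m_nf t \<Longrightarrow> True"
  by (induction t and t rule: m_var_m_nf.inducts) (auto intro: m_var_m_nf.intros)

lemma m_var_iff: "m_var t \<longleftrightarrow> m_nf t \<and> \<not> ends_in_Lam t"
proof
  show "m_nf t \<and> \<not> ends_in_Lam t \<Longrightarrow> m_var t"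
  proof (induction t)
    case (App t u r)
    then show ?case by (auto elim: m_nf.cases intro: mv_app)
  qed (auto intro: mv_var)
qed (rule m_varD)

lemma dbeta_not_m_nf: "dbeta t t' \<Longrightarrow> \<not> m_nf t"
proof (induction rule: dbeta.induct)
  case (root t t')
  then obtain D s u r where "t = App (fill D (Lam s)) u r"
    by (auto elim: dbeta_root.cases)
  moreover have "\<not> m_var (fill D (Lam s))"
    using m_var_iff ends_in_Lam_iff_fill by blast
  ultimately show ?case by (auto elim: m_nf.cases)
next
  case (app1 t t' u r)
  then show ?case using m_varD by (auto elim: m_nf.cases)
qed (auto elim: m_nf.cases)

lemma normal_form_LamD: "normal_form (Lam t) \<Longrightarrow> normal_form t"
  unfolding normal_form_def using dbeta.lam by blast

lemma normal_form_AppD: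
  assumes "normal_form (App t u r)"
  shows "normal_form t" "normal_form u" "normal_form r" "\<not> ends_in_Lam t"
proof -
  show "normal_form t" "normal_form u" "normal_form r"
    using assms unfolding normal_form_def by (blast intro: dbeta.intros)+
  show "\<not> ends_in_Lam t"
  proof
    assume "ends_in_Lam t"
    then obtain D s where "t = fill D (Lam s)"
      using ends_in_Lam_iff_fill by blast
    then have "\<exists>t'. dbeta (App t u r) t'"
      by (blast intro: dbeta.root dbeta_root.intros)
    then show False
      using assms unfolding normal_form_def by blast
  qed
qed

lemma normal_form_imp_m_nf: "normal_form t \<Longrightarrow> m_nf t"
proof (induction t)
  case (Lam t)
  then show ?case by (blast dest: normal_form_LamD intro: m_lam)
next
  case (App t u r)
  then show ?case
    using normal_form_AppD[OF App.prems] m_var_iff by (blast intro: m_app)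
qed (rule m_var')

theorem mainTheorem2:
  fixes t :: tm
  shows "normal_form t \<longleftrightarrow> m_nf t"
  using normal_form_imp_m_nf dbeta_not_m_nf unfolding normal_form_def by blast

end
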